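(* Let $n\geq 2$ be an integer, $N$ a finite von Neumann algebra with normal faithful tracial state $\tau_N$, and $a=(a_{ij})_{1\leq i,j\leq n}\in M_n(N)$. Define the completely positive map $T_a$ on $M_n(\mathbb{C})$ by $T_a(x)=(\mathrm{id}_n\otimes\tau_N)(a(x\otimes1_N)a^* )$. Then $$F(T_a)=\tfrac14\|a+a^t\|_2^2\,W_n^+ + \tfrac14\|a-a^t\|_2^2\,W_n^-,$$ where $a^t=(a_{ji})_{1\leq i,j\leq n}\in M_n(N)$.
   Context: $M_n(N)=M_n(\mathbb{C})\otimes N$ and $\|x\|_2=((\tau_n\otimes\tau_N)(x^*x))^{1/2}$ with $\tau_n$ the normalized trace on $M_n(\mathbb{C})$. For $u\in\mathcal{U}(n)$ and a linear map $T$ on $M_n(\mathbb{C})$, $\rho_u(T)=\mathrm{ad}(u)\,T\,\mathrm{ad}(u^t)$ with $\mathrm{ad}(v)(x)=vxv^*$ and $u^t$ the transpose; the twirling map is $F(T)=\int_{\mathcal{U}(n)}\rho_u(T)\,du$ (Haar probability measure). The Holevo–Werner channels are $W_n^+(x)=\frac{1}{n+1}(\mathrm{Tr}_n(x)1_n+x^t)$, $W_n^-(x)=\frac{1}{n-1}(\mathrm{Tr}_n(x)1_n-x^t)$, $\mathrm{Tr}_n$ the non-normalized trace. *)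

theory Defs
  imports "HOL-Probability.Probability"
begin

text \<open>Abstract tracial *-algebra (N, tau_N): a unital complex *-algebra, given by a
ring_1 type 'b together with a complex scalar action sc, an involution st and a
faithful positive tracial state tau.  (A finite von Neumann algebra with normal
faithful tracial state is an instance.)\<close>

definition tracial_star_alg ::
  "(complex \<Rightarrow> 'b::ring_1 \<Rightarrow> 'b) \<Rightarrow> ('b \<Rightarrow> 'b) \<Rightarrow> ('b \<Rightarrow> complex) \<Rightarrow> bool" where
  "tracial_star_alg sc st tau \<longleftrightarrow>
     (\<forall>c x y. sc c (x + y) = sc c x + sc c y) \<and>
     (\<forall>c d x. sc (c + d) x = sc c x + sc d x) \<and>
     (\<forall>c d x. sc (c * d) x = sc c (sc d x)) \<and>
     (\<forall>x. sc 1 x = x) \<and>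
     (\<forall>c x y. sc c (x * y) = sc c x * y \<and> sc c (x * y) = x * sc c y) \<and>
     (\<forall>x. st (st x) = x) \<and>
     (\<forall>x y. st (x + y) = st x + st y) \<and>
     (\<forall>x y. st (x * y) = st y * st x) \<and>
     (\<forall>c x. st (sc c x) = sc (cnj c) (st x)) \<and>
     (\<forall>x y. tau (x + y) = tau x + tau y) \<and>
     (\<forall>c x. tau (sc c x) = c * tau x) \<and>
     tau 1 = 1 \<and>
     (\<forall>x y. tau (x * y) = tau (y * x)) \<and>
     (\<forall>x. tau (st x * x) \<in> \<real> \<and> Re (tau (st x * x)) \<ge> 0) \<and>
     (\<forall>x. tau (st x * x) = 0 \<longrightarrow> x = 0)"

definition cadj :: "complex^'n^'n \<Rightarrow> complex^'n^'n" where
  "cadj u = (\<chi> i j. cnj (u $ j $ i))"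

definition unitaries :: "(complex^'n^'n) set" where
  "unitaries = {u. u ** cadj u = mat 1}"

text \<open>Haar probability measure on U(n): a left-invariant Borel probability measure
(unique by uniqueness of Haar measure on the compact group U(n)).\<close>
definition haar_unitary :: "(complex^'n^'n) measure \<Rightarrow> bool" where
  "haar_unitary \<mu> \<longleftrightarrow>
     prob_space \<mu> \<and> space \<mu> = unitaries \<and>
     sets \<mu> = sets (restrict_space borel unitaries) \<and>
     (\<forall>v\<in>unitaries. distr \<mu> \<mu> (\<lambda>u. v ** u) = \<mu>)"

definition ad :: "complex^'n^'n \<Rightarrow> complex^'n^'n \<Rightarrow> complex^'n^'n" where
  "ad v x = v ** x ** cadj v"

definition rho ::
  "complex^'n^'n \<Rightarrow> (complex^'n^'n \<Rightarrow> complex^'n^'n) \<Rightarrow> complex^'n^'n \<Rightarrow> complex^'n^'n" where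
  "rho u T = ad u \<circ> T \<circ> ad (transpose u)"

definition twirl ::
  "(complex^'n^'n) measure \<Rightarrow> (complex^'n^'n \<Rightarrow> complex^'n^'n) \<Rightarrow> complex^'n^'n \<Rightarrow> complex^'n^'n" where
  "twirl \<mu> T x = integral\<^sup>L \<mu> (\<lambda>u. rho u T x)"

definition W_plus :: "complex^'n^'n \<Rightarrow> complex^'n^'n" where
  "W_plus x = (1 / (of_nat CARD('n) + 1)) *\<^sub>R (mat (trace x) + transpose x)"

definition W_minus :: "complex^'n^'n \<Rightarrow> complex^'n^'n" where
  "W_minus x = (1 / (of_nat CARD('n) - 1)) *\<^sub>R (mat (trace x) - transpose x)"

definition madj :: "('b::ring_1 \<Rightarrow> 'b) \<Rightarrow> 'b^'n^'n \<Rightarrow> 'b^'n^'n" where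
  "madj st a = (\<chi> i j. st (a $ j $ i))"

definition tens1 :: "(complex \<Rightarrow> 'b::ring_1 \<Rightarrow> 'b) \<Rightarrow> complex^'n^'n \<Rightarrow> 'b^'n^'n" where
  "tens1 sc x = (\<chi> i j. sc (x $ i $ j) 1)"

definition Tmap ::
  "(complex \<Rightarrow> 'b::ring_1 \<Rightarrow> 'b) \<Rightarrow> ('b \<Rightarrow> 'b) \<Rightarrow> ('b \<Rightarrow> complex) \<Rightarrow> 'b^'n^'n
     \<Rightarrow> complex^'n^'n \<Rightarrow> complex^'n^'n" where
  "Tmap sc st tau a x = (\<chi> i j. tau ((a ** tens1 sc x ** madj st a) $ i $ j))"

definition norm2_sq ::
  "('b::ring_1 \<Rightarrow> 'b) \<Rightarrow> ('b \<Rightarrow> complex) \<Rightarrow> 'b^'n^'n \<Rightarrow> real" where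
  "norm2_sq st tau x = Re ((\<Sum>i\<in>UNIV. tau ((madj st x ** x) $ i $ i)) / of_nat CARD('n))"

end

theory Submission
  imports Defs
begin

text \<open>A linear map on \<open>M\<^sub>n\<close> is written \<open>x \<mapsto> (\<Sum>\<^sub>p\<^sub>,\<^sub>q G\<^sub>i\<^sub>j\<^sub>p\<^sub>q x\<^sub>p\<^sub>q)\<^sub>i\<^sub>j\<close>. Then \<open>\<rho>\<^sub>u\<close> acts on
  the kernel \<open>G\<close> by \<open>u\<close> in the first and third index and by its complex conjugate in the second
  and fourth, so the kernel of the twirl \<open>F(T)\<close> is the Haar average of these kernels and is
  invariant under every unitary. Invariance under diagonal phases and coordinate permutations
  confines an invariant kernel to the span of \<open>\<delta>\<^sub>i\<^sub>j\<delta>\<^sub>p\<^sub>q\<close>, \<open>\<delta>\<^sub>i\<^sub>q\<delta>\<^sub>j\<^sub>p\<close> and \<open>\<delta>\<^sub>i\<^sub>j\<delta>\<^sub>j\<^sub>p\<delta>\<^sub>p\<^sub>q\<close>, and one Householder reflection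
  excludes the last; hence \<open>F(T)(x) = A Tr(x) 1 + B x\<^sup>t\<close>. The contractions \<open>\<Sum> G\<^sub>i\<^sub>i\<^sub>p\<^sub>p\<close> and
  \<open>\<Sum> G\<^sub>i\<^sub>p\<^sub>p\<^sub>i\<close> are unitarily invariant and determine \<open>A\<close> and \<open>B\<close>. For \<open>T\<^sub>a\<close> they are
  \<open>\<Sum> \<tau>(a\<^sub>i\<^sub>p a\<^sub>i\<^sub>p\<^sup>*)\<close> and \<open>\<Sum> \<tau>(a\<^sub>i\<^sub>p a\<^sub>p\<^sub>i\<^sup>*)\<close>, whose sum and difference are
  \<open>n/2 \<cdot> \<parallel>a \<plusminus> a\<^sup>t\<parallel>\<^sub>2\<^sup>2\<close>.\<close>

type_synonym 'n tensor4 = "'n \<Rightarrow> 'n \<Rightarrow> 'n \<Rightarrow> 'n \<Rightarrow> complex"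

definition kron :: "'n \<Rightarrow> 'n \<Rightarrow> complex" where
  "kron x y = (if x = y then 1 else 0)"

lemma sum_kron_left [simp]: "(\<Sum>j\<in>UNIV. kron i j * f j) = f i" for i :: "'n::finite"
  by (simp add: kron_def if_distrib[of "\<lambda>c. c * f _"] cong: if_cong)

lemma sum_kron_right [simp]: "(\<Sum>j\<in>UNIV. f j * kron i j) = f i" for i :: "'n::finite"
  by (simp add: kron_def if_distrib[of "\<lambda>c. f _ * c"] cong: if_cong)

lemma sum_kron [simp]: "(\<Sum>j\<in>UNIV. kron i j) = 1" for i :: "'n::finite"
  using sum_kron_left[of i "\<lambda>_. 1"] by simp

lemma kron_refl [simp]: "kron i i = 1"
  by (simp add: kron_def)

lemma kron_cnj [simp]: "cnj (kron i j) = kron i j"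
  by (simp add: kron_def)

lemma kron_commute: "kron i j = kron j i"
  by (auto simp: kron_def)

lemma kron_mult_kron_swapped [simp]: "kron i j * kron j i = kron i j"
  by (simp add: kron_def)

section \<open>Unitary matrices\<close>

lemma cadj_mult: "cadj (A ** B) = cadj B ** cadj (A::complex^'n^'n)"
  unfolding cadj_def matrix_matrix_mult_def
  by (simp add: vec_eq_iff cnj_sum mult.commute)

lemma unitary_cadj_mult: "u \<in> unitaries \<Longrightarrow> cadj u ** u = mat 1"
  unfolding unitaries_def using matrix_left_right_inverse by blast

lemma unitaries_mult:
  assumes "u \<in> unitaries" and "v \<in> unitaries" shows "v ** u \<in> unitaries"
proof -
  have "v ** u ** cadj (v ** u) = v ** (u ** cadj u) ** cadj v"
    by (simp add: cadj_mult matrix_mul_assoc)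
  with assms show ?thesis by (simp add: unitaries_def matrix_mul_rid)
qed

lemma unitary_rows_orthonormal:
  assumes "u \<in> unitaries" shows "(\<Sum>a\<in>UNIV. u$i$a * cnj (u$j$a)) = kron i j"
proof -
  have "(u ** cadj u) $ i $ j = mat 1 $ i $ j" using assms by (simp add: unitaries_def)
  then show ?thesis by (simp add: matrix_matrix_mult_def cadj_def mat_def kron_def)
qed

lemma unitary_cols_orthonormal:
  "u \<in> unitaries \<Longrightarrow> (\<Sum>i\<in>UNIV. u$i$a * cnj (u$i$b)) = kron a b"
  by (drule unitary_cadj_mult, drule arg_cong[where f = "\<lambda>m. m $ b $ a"])
    (auto simp: matrix_matrix_mult_def cadj_def mat_def kron_def mult.commute)

lemma unitary_entry_bound:
  assumes "u \<in> unitaries" shows "norm (u$i$a) \<le> 1"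
proof -
  have "complex_of_real (\<Sum>b\<in>UNIV. (norm (u$i$b))\<^sup>2) = (\<Sum>b\<in>UNIV. u$i$b * cnj (u$i$b))"
    by (simp add: complex_norm_square del: of_real_power)
  also have "\<dots> = 1"
    using unitary_rows_orthonormal[OF assms] by (simp add: kron_def)
  finally have "(norm (u$i$a))\<^sup>2 \<le> 1"
    by (metis (mono_tags) of_real_eq_1_iff finite UNIV_I member_le_sum zero_le_power2)
  then show ?thesis by (simp add: power_le_one_iff)
qed

lemma norm_vec_le_sum_norm: "norm (x::'a::real_normed_vector^'n) \<le> (\<Sum>i\<in>UNIV. norm (x$i))"
  by (simp add: norm_vec_def L2_set_le_sum)

lemma compact_unitaries: "compact (unitaries :: (complex^'n^'n) set)"
proof -
  have "continuous_on UNIV (\<lambda>u::complex^'n^'n. u ** cadj u)"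
    unfolding matrix_matrix_mult_def cadj_def by (intro continuous_intros)
  then have "closed ((\<lambda>u::complex^'n^'n. u ** cadj u) -` {mat 1})"
    by (simp add: closed_vimage)
  moreover have "norm u \<le> of_nat (CARD('n) * CARD('n))" if "u \<in> unitaries" for u :: "complex^'n^'n"
  proof -
    have "norm u \<le> (\<Sum>i\<in>UNIV. \<Sum>j\<in>UNIV. norm (u$i$j))"
      using norm_vec_le_sum_norm[of u] norm_vec_le_sum_norm[of "u $ _"]
      by (meson order_trans sum_mono)
    also have "\<dots> \<le> (\<Sum>i\<in>(UNIV::'n set). \<Sum>j\<in>(UNIV::'n set). 1)"
      by (intro sum_mono unitary_entry_bound that)
    finally show ?thesis by simp
  qed
  ultimately show ?thesis
    unfolding compact_eq_bounded_closed bounded_iff unitaries_def vimage_def by auto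
qed

section \<open>The unitary action on 4-tensors\<close>

definition leg1 :: "complex^'n^'n \<Rightarrow> 'n::finite tensor4 \<Rightarrow> 'n tensor4" where
  "leg1 v K = (\<lambda>i j p q. \<Sum>a\<in>UNIV. v$i$a * K a j p q)"

definition leg2 :: "complex^'n^'n \<Rightarrow> 'n::finite tensor4 \<Rightarrow> 'n tensor4" where
  "leg2 v K = (\<lambda>i j p q. \<Sum>b\<in>UNIV. cnj (v$j$b) * K i b p q)"

definition leg3 :: "complex^'n^'n \<Rightarrow> 'n::finite tensor4 \<Rightarrow> 'n tensor4" where
  "leg3 v K = (\<lambda>i j p q. \<Sum>c\<in>UNIV. v$p$c * K i j c q)"

definition leg4 :: "complex^'n^'n \<Rightarrow> 'n::finite tensor4 \<Rightarrow> 'n tensor4" where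
  "leg4 v K = (\<lambda>i j p q. \<Sum>d\<in>UNIV. cnj (v$q$d) * K i j p d)"

definition tensor_act :: "complex^'n^'n \<Rightarrow> 'n::finite tensor4 \<Rightarrow> 'n tensor4" where
  "tensor_act v K = leg1 v (leg2 v (leg3 v (leg4 v K)))"

lemma leg1_mult: "leg1 v (leg1 u K) = leg1 (v ** u) K"
  and leg2_mult: "leg2 v (leg2 u K) = leg2 (v ** u) K"
  and leg3_mult: "leg3 v (leg3 u K) = leg3 (v ** u) K"
  and leg4_mult: "leg4 v (leg4 u K) = leg4 (v ** u) K"
  unfolding leg1_def leg2_def leg3_def leg4_def matrix_matrix_mult_def
  by (auto simp: sum_distrib_left sum_distrib_right mult.assoc cnj_sum
           intro!: ext sum.swap[THEN trans])

lemma legs_commute: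
  "leg1 v (leg2 u K) = leg2 u (leg1 v K)" "leg1 v (leg3 u K) = leg3 u (leg1 v K)"
  "leg1 v (leg4 u K) = leg4 u (leg1 v K)" "leg2 v (leg3 u K) = leg3 u (leg2 v K)"
  "leg2 v (leg4 u K) = leg4 u (leg2 v K)" "leg3 v (leg4 u K) = leg4 u (leg3 v K)"
  unfolding leg1_def leg2_def leg3_def leg4_def
  by (auto simp: sum_distrib_left mult.left_commute intro!: ext sum.swap[THEN trans])

lemma tensor_act_mult: "tensor_act v (tensor_act u K) = tensor_act (v ** u) K"
  unfolding tensor_act_def
  by (simp add: legs_commute flip: leg1_mult leg2_mult leg3_mult leg4_mult)

lemma tensor_act_apply:
  "tensor_act v K i j p q = (\<Sum>a\<in>UNIV. \<Sum>b\<in>UNIV. \<Sum>c\<in>UNIV. \<Sum>d\<in>UNIV.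
     v$i$a * cnj (v$j$b) * v$p$c * cnj (v$q$d) * K a b c d)"
  unfolding tensor_act_def leg1_def leg2_def leg3_def leg4_def
  by (simp add: sum_distrib_left mult.assoc)

lemma continuous_tensor_act: "continuous_on S (\<lambda>u. tensor_act u K i j p q)"
  unfolding tensor_act_apply by (intro continuous_intros)

lemma unitary_contract:
  assumes "u \<in> unitaries"
  shows "(\<Sum>i\<in>UNIV. \<Sum>a\<in>UNIV. u$i$a * (\<Sum>b\<in>UNIV. cnj (u$i$b) * f a b)) = (\<Sum>a\<in>UNIV. f a a)"
proof -
  have "(\<Sum>i\<in>UNIV. \<Sum>a\<in>UNIV. u$i$a * (\<Sum>b\<in>UNIV. cnj (u$i$b) * f a b))
      = (\<Sum>i\<in>UNIV. \<Sum>a\<in>UNIV. \<Sum>b\<in>UNIV. u$i$a * cnj (u$i$b) * f a b)"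
    by (simp add: sum_distrib_left mult.assoc)
  also have "\<dots> = (\<Sum>a\<in>UNIV. \<Sum>b\<in>UNIV. \<Sum>i\<in>UNIV. u$i$a * cnj (u$i$b) * f a b)"
    by (subst sum.swap) (rule sum.cong[OF refl], rule sum.swap)
  also have "\<dots> = (\<Sum>a\<in>UNIV. \<Sum>b\<in>UNIV. kron a b * f a b)"
    by (simp add: unitary_cols_orthonormal[OF assms] flip: sum_distrib_right)
  finally show ?thesis by simp
qed

definition contract_iipp :: "'n::finite tensor4 \<Rightarrow> complex" where
  "contract_iipp K = (\<Sum>i\<in>UNIV. \<Sum>p\<in>UNIV. K i i p p)"

definition contract_ippi :: "'n::finite tensor4 \<Rightarrow> complex" where
  "contract_ippi K = (\<Sum>i\<in>UNIV. \<Sum>p\<in>UNIV. K i p p i)"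

lemma contract_iipp_tensor_act:
  assumes "u \<in> unitaries" shows "contract_iipp (tensor_act u K) = contract_iipp K"
proof -
  have "contract_iipp (tensor_act u K) = (\<Sum>p\<in>UNIV. \<Sum>i\<in>UNIV. leg1 u (leg2 u (leg3 u (leg4 u K))) i i p p)"
    unfolding contract_iipp_def tensor_act_def by (rule sum.swap)
  also have "\<dots> = (\<Sum>i\<in>UNIV. \<Sum>p\<in>UNIV. leg3 u (leg4 u K) i i p p)"
    unfolding leg1_def leg2_def by (subst sum.swap) (simp add: unitary_contract[OF assms])
  also have "\<dots> = contract_iipp K"
    unfolding contract_iipp_def leg3_def leg4_def by (simp add: unitary_contract[OF assms])
  finally show ?thesis .
qed

lemma contract_ippi_tensor_act:
  assumes "u \<in> unitaries" shows "contract_ippi (tensor_act u K) = contract_ippi K"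
proof -
  have reordered: "tensor_act u K = leg1 u (leg4 u (leg3 u (leg2 u K)))"
    unfolding tensor_act_def by (simp add: legs_commute)
  have "contract_ippi (tensor_act u K) = (\<Sum>p\<in>UNIV. \<Sum>i\<in>UNIV. leg1 u (leg4 u (leg3 u (leg2 u K))) i p p i)"
    unfolding contract_ippi_def reordered by (rule sum.swap)
  also have "\<dots> = (\<Sum>i\<in>UNIV. \<Sum>p\<in>UNIV. leg3 u (leg2 u K) i p p i)"
    unfolding leg1_def leg4_def by (subst sum.swap) (simp add: unitary_contract[OF assms])
  also have "\<dots> = contract_ippi K"
    unfolding contract_ippi_def leg3_def leg2_def by (simp add: unitary_contract[OF assms])
  finally show ?thesis .
qed

lemma tensor_act_add:
  "tensor_act v (\<lambda>i j p q. X i j p q + Y i j p q) = (\<lambda>i j p q. tensor_act v X i j p q + tensor_act v Y i j p q)"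
  by (intro ext) (simp add: tensor_act_apply distrib_left sum.distrib)

lemma tensor_act_scale:
  "tensor_act v (\<lambda>i j p q. c * X i j p q) = (\<lambda>i j p q. c * tensor_act v X i j p q)"
  by (intro ext) (simp add: tensor_act_apply sum_distrib_left mult.left_commute)

definition ad_fun :: "complex^'n^'n \<Rightarrow> ('n::finite \<Rightarrow> 'n \<Rightarrow> complex) \<Rightarrow> 'n \<Rightarrow> 'n \<Rightarrow> complex" where
  "ad_fun v X i j = (\<Sum>a\<in>UNIV. \<Sum>b\<in>UNIV. v$i$a * cnj (v$j$b) * X a b)"

lemma tensor_act_product:
  "tensor_act v (\<lambda>i j p q. X i j * Y p q) = (\<lambda>i j p q. ad_fun v X i j * ad_fun v Y p q)"
  unfolding ad_fun_def sum_distrib_right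
  unfolding sum_distrib_left
  by (intro ext) (simp add: tensor_act_apply mult_ac)

lemma tensor_act_crossed_product:
  "tensor_act v (\<lambda>i j p q. X i q * Y p j) = (\<lambda>i j p q. ad_fun v X i q * ad_fun v Y p j)"
proof (intro ext)
  fix i j p q
  have "tensor_act v (\<lambda>i j p q. X i q * Y p j) i j p q
      = (\<Sum>a\<in>UNIV. \<Sum>d\<in>UNIV. \<Sum>c\<in>UNIV. \<Sum>b\<in>UNIV.
           v$i$a * cnj (v$q$d) * X a d * (v$p$c * cnj (v$j$b) * Y c b))"
  proof -
    have reverse3: "(\<Sum>b\<in>B. \<Sum>c\<in>C. \<Sum>d\<in>D. F b c d) = (\<Sum>d\<in>D. \<Sum>c\<in>C. \<Sum>b\<in>B. F b c d)"
      for B C D and F :: "'n \<Rightarrow> 'n \<Rightarrow> 'n \<Rightarrow> complex"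
      by (subst sum.swap, subst sum.swap, rule sum.cong[OF refl], rule sum.swap)
    show ?thesis
      unfolding tensor_act_apply by (rule sum.cong[OF refl], subst reverse3) (simp add: mult_ac)
  qed
  then show "tensor_act v (\<lambda>i j p q. X i q * Y p j) i j p q = ad_fun v X i q * ad_fun v Y p j"
    unfolding ad_fun_def sum_distrib_right
    unfolding sum_distrib_left .
qed

lemma ad_fun_kron: "v \<in> unitaries \<Longrightarrow> ad_fun v kron = kron"
  by (intro ext) (simp add: ad_fun_def unitary_rows_orthonormal)

lemma tensor_act_kron_kron:
  "v \<in> unitaries \<Longrightarrow> tensor_act v (\<lambda>i j p q. kron i j * kron p q) = (\<lambda>i j p q. kron i j * kron p q)"
  by (simp add: tensor_act_product ad_fun_kron)

lemma tensor_act_kron_kron_crossed: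
  "v \<in> unitaries \<Longrightarrow> tensor_act v (\<lambda>i j p q. kron i q * kron p j) = (\<lambda>i j p q. kron i q * kron p j)"
  by (simp add: tensor_act_crossed_product ad_fun_kron)

lemma tensor_act_kron_diagonal:
  "tensor_act v (\<lambda>i j p q. kron i j * kron j p * kron p q) i j p q
     = (\<Sum>a\<in>UNIV. v$i$a * cnj (v$j$a) * v$p$a * cnj (v$q$a))"
  unfolding tensor_act_apply by (simp add: mult.assoc[symmetric])

definition monomial_mat :: "('n::finite \<Rightarrow> 'n) \<Rightarrow> ('n \<Rightarrow> complex) \<Rightarrow> complex^'n^'n" where
  "monomial_mat s d = (\<chi> i j. d i * kron (s i) j)"

lemma monomial_mat_unitary:
  assumes "inj s" and "\<And>k. d k * cnj (d k) = 1"
  shows "monomial_mat s d \<in> unitaries"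
proof -
  have "(\<Sum>k\<in>UNIV. d i * kron (s i) k * cnj (d j * kron (s j) k)) = kron i j" for i j
    using assms by (simp add: mult_ac flip: sum_distrib_left) (simp add: kron_def inj_eq)
  then show ?thesis
    unfolding unitaries_def monomial_mat_def cadj_def matrix_matrix_mult_def
    by (simp add: vec_eq_iff mat_def kron_def)
qed

lemma tensor_act_monomial_mat:
  "tensor_act (monomial_mat s d) K i j p q
     = d i * cnj (d j) * d p * cnj (d q) * K (s i) (s j) (s p) (s q)"
  unfolding tensor_act_def leg1_def leg2_def leg3_def leg4_def monomial_mat_def
  by (simp add: mult.assoc flip: sum_distrib_left)

section \<open>Unitarily invariant 4-tensors\<close>

definition unitarily_invariant :: "'n::finite tensor4 \<Rightarrow> bool" where
  "unitarily_invariant K \<longleftrightarrow> (\<forall>v\<in>unitaries. tensor_act v K = K)"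

lemma unitarily_invariant_support:
  fixes K :: "'n::finite tensor4"
  assumes "unitarily_invariant K" and "K i j p q \<noteq> 0"
  shows "(i = j \<and> p = q) \<or> (i = q \<and> j = p)"
proof -
  define d where "d r x = (if x = r then \<i> else 1)" for r x :: 'n
  \<comment> \<open>invariance under the phase \<open>\<i>\<close> at \<open>r\<close> forces \<open>r\<close> to occur equally often among \<open>i, p\<close> and among \<open>j, q\<close>\<close>
  have "d r i * cnj (d r j) * d r p * cnj (d r q) = 1" for r
  proof -
    have "monomial_mat id (d r) \<in> unitaries"
      by (rule monomial_mat_unitary) (simp_all add: d_def)
    then have "(d r i * cnj (d r j) * d r p * cnj (d r q) - 1) * K i j p q = 0"
      using assms(1) tensor_act_monomial_mat[of id "d r" K i j p q]
      by (simp add: unitarily_invariant_def algebra_simps)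
    then show ?thesis using assms(2) by simp
  qed
  from this[of i] this[of j] this[of p] this[of q] show ?thesis
    unfolding d_def by (auto split: if_splits)
qed

lemma unitarily_invariant_perm:
  assumes "unitarily_invariant K" and "inj s"
  shows "K (s i) (s j) (s p) (s q) = K i j p q"
  using assms monomial_mat_unitary[of s "\<lambda>_. 1"] tensor_act_monomial_mat[of s "\<lambda>_. 1" K]
  by (simp add: unitarily_invariant_def)

lemma inj_map_two_points:
  assumes "i \<noteq> p" and "r \<noteq> s"
  obtains \<sigma> :: "'a \<Rightarrow> 'a" where "inj \<sigma>" "\<sigma> i = r" "\<sigma> p = s"
proof -
  define \<tau> where "\<tau> a b = id (a := b, b := a)" for a b :: 'a
  have inj_\<tau>: "inj (\<tau> a b)" for a b
    unfolding \<tau>_def inj_def by auto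
  show ?thesis
    by (rule that[of "\<tau> (\<tau> i r p) s \<circ> \<tau> i r"]) (use assms inj_\<tau> in \<open>auto simp: \<tau>_def inj_compose\<close>)
qed

lemma unitarily_invariant_three_terms:
  fixes K :: "'n::finite tensor4" and r s :: 'n
  assumes inv: "unitarily_invariant K" and "r \<noteq> s"
  defines "A \<equiv> K r r s s" and "B \<equiv> K r s s r" and "E \<equiv> K r r r r - K r r s s - K r s s r"
  shows "K = (\<lambda>i j p q. A * (kron i j * kron p q) + B * (kron i q * kron p j)
                       + E * (kron i j * kron j p * kron p q))"
proof (intro ext)
  fix i j p q
  have KA: "K x x y y = A" and KB: "K x y y x = B" if xy: "x \<noteq> y" for x y
  proof -
    obtain \<sigma> where "inj \<sigma>" "\<sigma> x = r" "\<sigma> y = s"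
      by (rule inj_map_two_points[OF xy \<open>r \<noteq> s\<close>])
    then show "K x x y y = A" "K x y y x = B"
      using unitarily_invariant_perm[OF inv \<open>inj \<sigma>\<close>, of x x y y]
        unitarily_invariant_perm[OF inv \<open>inj \<sigma>\<close>, of x y y x]
      unfolding A_def B_def by simp_all
  qed
  have KD: "K x x x x = A + B + E" for x
  proof (cases "x = r")
    case False
    obtain \<sigma> where "inj \<sigma>" "\<sigma> x = r" "\<sigma> r = s"
      by (rule inj_map_two_points[OF False \<open>r \<noteq> s\<close>])
    then show ?thesis
      using unitarily_invariant_perm[OF inv \<open>inj \<sigma>\<close>, of x x x x] by (simp add: A_def B_def E_def)
  qed (simp add: A_def B_def E_def)
  show "K i j p q = A * (kron i j * kron p q) + B * (kron i q * kron p j)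
                    + E * (kron i j * kron j p * kron p q)"
  proof (cases "(i = j \<and> p = q) \<or> (i = q \<and> j = p)")
    case True
    then consider "i = j" "j = p" "p = q" | "i = j" "p = q" "i \<noteq> p" | "i = q" "j = p" "i \<noteq> p"
      by blast
    then show ?thesis
      by cases (simp_all add: KA KB KD kron_def)
  next
    case False
    then have "K i j p q = 0" using unitarily_invariant_support[OF inv] by blast
    with False show ?thesis by (auto simp: kron_def)
  qed
qed

definition householder :: "('n::finite \<Rightarrow> complex) \<Rightarrow> complex^'n^'n" where
  "householder w = (\<chi> i j. kron i j - 2 / (\<Sum>k\<in>UNIV. w k * cnj (w k)) * w i * cnj (w j))"

lemma householder_unitary:
  fixes w :: "'n::finite \<Rightarrow> complex"
  defines "N \<equiv> \<Sum>k\<in>UNIV. w k * cnj (w k)"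
  assumes "N \<noteq> 0"
  shows "householder w \<in> unitaries"
proof -
  define c where "c = 2 / N"
  have "cnj N = N" unfolding N_def by (simp add: cnj_sum mult.commute)
  then have cnj_c: "cnj c = c" by (simp add: c_def)
  have cN: "c * N = 2" using assms(2) by (simp add: c_def)
  have "(\<Sum>j\<in>UNIV. (kron i j - c * w i * cnj (w j)) * cnj (kron k j - c * w k * cnj (w j))) = kron i k"
    for i k
  proof -
    have "(\<Sum>j\<in>UNIV. (kron i j - c * w i * cnj (w j)) * cnj (kron k j - c * w k * cnj (w j)))
        = (\<Sum>j\<in>UNIV. kron i j * kron k j - c * cnj (w k) * (kron i j * w j)
                        - c * w i * (cnj (w j) * kron k j) + c * c * w i * cnj (w k) * (w j * cnj (w j)))"
      by (rule sum.cong) (simp_all add: cnj_c algebra_simps)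
    also have "\<dots> = kron k i - c * cnj (w k) * w i - c * w i * cnj (w k) + c * c * w i * cnj (w k) * N"
      by (simp only: sum.distrib sum_subtractf sum_distrib_left[symmetric] sum_kron_left sum_kron_right
                     N_def)
    also have "\<dots> = kron i k + (c * N - 2) * c * w i * cnj (w k)"
      by (simp add: algebra_simps kron_commute[of k])
    finally show ?thesis by (simp add: cN)
  qed
  then show ?thesis
    unfolding unitaries_def householder_def cadj_def matrix_matrix_mult_def
    by (simp add: vec_eq_iff mat_def kron_def c_def N_def)
qed

lemma sum_sq_kron_plus_double_kron:
  fixes r s :: "'n::finite"
  assumes "r \<noteq> s"
  shows "(\<Sum>k\<in>UNIV. (kron r k + 2 * kron s k) * cnj (kron r k + 2 * kron s k)) = 5"
proof -
  have "(\<Sum>k\<in>UNIV. (kron r k + 2 * kron s k) * cnj (kron r k + 2 * kron s k))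
      = (\<Sum>k\<in>UNIV. kron r k + 4 * kron s k)"
    using assms by (intro sum.cong) (auto simp: kron_def)
  then show ?thesis by (simp add: sum.distrib flip: sum_distrib_left)
qed

lemma householder_row_fourth_moment:
  fixes r s :: "'n::finite"
  assumes "r \<noteq> s"
  defines "H \<equiv> householder (\<lambda>x. kron r x + 2 * kron s x)"
  shows "(\<Sum>a\<in>UNIV. H$r$a * cnj (H$r$a) * H$r$a * cnj (H$r$a)) = 337 / 625"
proof -
  have "H$r$a * cnj (H$r$a) * H$r$a * cnj (H$r$a) = 81/625 * kron r a + 256/625 * kron s a" for a
    using assms(1) unfolding H_def householder_def sum_sq_kron_plus_double_kron[OF assms(1)]
    by (auto simp: kron_def)
  then show ?thesis by (simp only: sum.distrib sum_kron_right) simp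
qed

lemma unitarily_invariant_form:
  fixes K :: "'n::finite tensor4"
  assumes "CARD('n) \<ge> 2" and inv: "unitarily_invariant K"
  obtains A B where "K = (\<lambda>i j p q. A * (kron i j * kron p q) + B * (kron i q * kron p j))"
proof -
  have "\<not> CARD('n) \<le> Suc 0" using assms(1) by simp
  then obtain r s :: 'n where "r \<noteq> s"
    unfolding card_le_Suc0_iff_eq[OF finite] by blast
  define A B E where "A = K r r s s" and "B = K r s s r" and "E = K r r r r - K r r s s - K r s s r"
  define H where "H = householder (\<lambda>x::'n. kron r x + 2 * kron s x)"
  have form: "K = (\<lambda>i j p q. A * (kron i j * kron p q) + B * (kron i q * kron p j)
                           + E * (kron i j * kron j p * kron p q))"
    unfolding A_def B_def E_def by (rule unitarily_invariant_three_terms[OF inv \<open>r \<noteq> s\<close>])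
  have H: "H \<in> unitaries"
    unfolding H_def by (rule householder_unitary) (use sum_sq_kron_plus_double_kron[OF \<open>r \<noteq> s\<close>] in simp)
  have act_K: "tensor_act H K = (\<lambda>i j p q. A * (kron i j * kron p q) + B * (kron i q * kron p j)
          + E * tensor_act H (\<lambda>i j p q. kron i j * kron j p * kron p q) i j p q)"
    by (subst form) (simp only: tensor_act_add tensor_act_scale tensor_act_kron_kron[OF H]
                       tensor_act_kron_kron_crossed[OF H])
  \<comment> \<open>\<open>H\<close> is not monomial: the fourth moment of its row \<open>r\<close> is \<open>337/625 \<noteq> 1\<close>\<close>
  have "K r r r r = tensor_act H K r r r r"
    using inv H by (simp add: unitarily_invariant_def)
  also have "\<dots> = A + B + E * (337 / 625)"
    unfolding act_K tensor_act_kron_diagonal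
    by (simp add: householder_row_fourth_moment[OF \<open>r \<noteq> s\<close>, folded H_def])
  finally have "A + B + E = A + B + E * (337 / 625)"
    by (simp add: A_def B_def E_def)
  then have "E = 0"
    by simp
  then show ?thesis
    using form that by auto
qed

section \<open>Haar averages\<close>

lemma haar_measurable:
  assumes "haar_unitary \<mu>" and "continuous_on unitaries f"
  shows "f \<in> borel_measurable \<mu>"
  using borel_measurable_continuous_on_restrict[OF assms(2)] assms(1)
  by (simp add: haar_unitary_def cong: measurable_cong_sets)

lemma haar_integrable:
  fixes f :: "complex^'n^'n \<Rightarrow> 'b::{banach, second_countable_topology}"
  assumes "haar_unitary \<mu>" and "continuous_on unitaries f"
  shows "integrable \<mu> f"
proof -
  interpret prob_space \<mu> using assms(1) by (simp add: haar_unitary_def)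
  have "compact (f ` unitaries)"
    using compact_continuous_image[OF assms(2) compact_unitaries] .
  then obtain B where "\<forall>u\<in>unitaries. norm (f u) \<le> B"
    by (auto dest!: compact_imp_bounded simp: bounded_iff)
  then show ?thesis
    using assms(1) by (intro integrable_const_bound[where B = B] AE_I2 haar_measurable[OF assms])
                      (simp add: haar_unitary_def)
qed

lemma haar_integral_left_mult:
  fixes f :: "complex^'n^'n \<Rightarrow> 'b::{banach, second_countable_topology}"
  assumes haar: "haar_unitary \<mu>" and "v \<in> unitaries" and "continuous_on unitaries f"
  shows "integral\<^sup>L \<mu> (\<lambda>u. f (v ** u)) = integral\<^sup>L \<mu> f"
proof -
  have sets: "sets \<mu> = sets (restrict_space borel unitaries)"
    using haar by (simp add: haar_unitary_def)
  have "continuous_on UNIV (\<lambda>u::complex^'n^'n. v ** u)"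
    unfolding matrix_matrix_mult_def by (intro continuous_intros)
  then have "(\<lambda>u. v ** u) \<in> measurable (restrict_space borel unitaries) (restrict_space borel unitaries)"
    by (intro measurable_restrict_space3)
       (auto intro: borel_measurable_continuous_onI unitaries_mult[OF _ \<open>v \<in> unitaries\<close>])
  then have "(\<lambda>u. v ** u) \<in> measurable \<mu> \<mu>"
    by (simp add: measurable_cong_sets[OF sets sets])
  then have "integral\<^sup>L \<mu> (\<lambda>u. f (v ** u)) = integral\<^sup>L (distr \<mu> \<mu> (\<lambda>u. v ** u)) f"
    by (rule integral_distr[symmetric]) (rule haar_measurable[OF haar assms(3)])
  also have "\<dots> = integral\<^sup>L \<mu> f"
    using haar \<open>v \<in> unitaries\<close> by (simp add: haar_unitary_def)
  finally show ?thesis .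
qed

definition twirl_kernel :: "(complex^'n^'n) measure \<Rightarrow> 'n::finite tensor4 \<Rightarrow> 'n tensor4" where
  "twirl_kernel \<mu> G = (\<lambda>i j p q. integral\<^sup>L \<mu> (\<lambda>u. tensor_act u G i j p q))"

lemma twirl_kernel_unitarily_invariant:
  fixes \<mu> :: "(complex^'n::finite^'n) measure"
  assumes haar: "haar_unitary \<mu>"
  shows "unitarily_invariant (twirl_kernel \<mu> G)"
  unfolding unitarily_invariant_def
proof (intro ballI ext)
  fix v :: "complex^'n^'n" and i j p q
  assume v: "v \<in> unitaries"
  note integrable = haar_integrable[OF haar continuous_tensor_act]
  have "tensor_act v (twirl_kernel \<mu> G) i j p q = integral\<^sup>L \<mu> (\<lambda>u. tensor_act v (tensor_act u G) i j p q)"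
    unfolding twirl_kernel_def tensor_act_apply[of v]
    by (simp add: integrable integrable_sum integral_sum)
  also have "\<dots> = integral\<^sup>L \<mu> (\<lambda>u. tensor_act (v ** u) G i j p q)"
    by (simp add: tensor_act_mult)
  also have "\<dots> = twirl_kernel \<mu> G i j p q"
    unfolding twirl_kernel_def by (rule haar_integral_left_mult[OF haar v continuous_tensor_act])
  finally show "tensor_act v (twirl_kernel \<mu> G) i j p q = twirl_kernel \<mu> G i j p q" .
qed

lemma contract_iipp_twirl_kernel:
  fixes \<mu> :: "(complex^'n::finite^'n) measure"
  assumes haar: "haar_unitary \<mu>"
  shows "contract_iipp (twirl_kernel \<mu> G) = contract_iipp G"
proof -
  interpret prob_space \<mu> using haar by (simp add: haar_unitary_def)
  have "contract_iipp (twirl_kernel \<mu> G) = integral\<^sup>L \<mu> (\<lambda>u. contract_iipp (tensor_act u G))"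
    unfolding contract_iipp_def twirl_kernel_def
    by (simp add: integral_sum integrable_sum haar_integrable[OF haar continuous_tensor_act])
  also have "\<dots> = integral\<^sup>L \<mu> (\<lambda>u. contract_iipp G)"
    using haar by (intro Bochner_Integration.integral_cong) (simp_all add: haar_unitary_def contract_iipp_tensor_act)
  finally show ?thesis by (simp add: prob_space)
qed

lemma contract_ippi_twirl_kernel:
  fixes \<mu> :: "(complex^'n::finite^'n) measure"
  assumes haar: "haar_unitary \<mu>"
  shows "contract_ippi (twirl_kernel \<mu> G) = contract_ippi G"
proof -
  interpret prob_space \<mu> using haar by (simp add: haar_unitary_def)
  have "contract_ippi (twirl_kernel \<mu> G) = integral\<^sup>L \<mu> (\<lambda>u. contract_ippi (tensor_act u G))"
    unfolding contract_ippi_def twirl_kernel_def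
    by (simp add: integral_sum integrable_sum haar_integrable[OF haar continuous_tensor_act])
  also have "\<dots> = integral\<^sup>L \<mu> (\<lambda>u. contract_ippi G)"
    using haar by (intro Bochner_Integration.integral_cong) (simp_all add: haar_unitary_def contract_ippi_tensor_act)
  finally show ?thesis by (simp add: prob_space)
qed

section \<open>Twirling a map given by a kernel\<close>

lemma sum_rotate3:
  "(\<Sum>a\<in>A. \<Sum>b\<in>B. \<Sum>c\<in>C. f a b c) = (\<Sum>c\<in>C. \<Sum>a\<in>A. \<Sum>b\<in>B. f a b c)"
  by (subst sum.swap, rule sum.cong[OF refl], rule sum.swap)

definition kernel_map :: "'n::finite tensor4 \<Rightarrow> complex^'n^'n \<Rightarrow> complex^'n^'n" where
  "kernel_map G x = (\<chi> i j. \<Sum>p\<in>UNIV. \<Sum>q\<in>UNIV. G i j p q * x$p$q)"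

lemma kernel_map_leg1: "kernel_map (leg1 v K) x = v ** kernel_map K x"
proof -
  have "(\<Sum>p\<in>UNIV. \<Sum>q\<in>UNIV. (\<Sum>a\<in>UNIV. v$i$a * K a j p q) * x$p$q)
      = (\<Sum>a\<in>UNIV. v$i$a * (\<Sum>p\<in>UNIV. \<Sum>q\<in>UNIV. K a j p q * x$p$q))" for i j
    by (simp add: sum_distrib_left sum_distrib_right mult.assoc) (rule sum_rotate3)
  then show ?thesis
    by (simp add: vec_eq_iff kernel_map_def leg1_def matrix_matrix_mult_def)
qed

lemma kernel_map_leg2: "kernel_map (leg2 v K) x = kernel_map K x ** cadj v"
proof -
  have "(\<Sum>p\<in>UNIV. \<Sum>q\<in>UNIV. (\<Sum>b\<in>UNIV. cnj (v$j$b) * K i b p q) * x$p$q)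
      = (\<Sum>b\<in>UNIV. (\<Sum>p\<in>UNIV. \<Sum>q\<in>UNIV. K i b p q * x$p$q) * cnj (v$j$b))" for i j
    by (simp add: sum_distrib_left sum_distrib_right mult_ac) (rule sum_rotate3)
  then show ?thesis
    by (simp add: vec_eq_iff kernel_map_def leg2_def matrix_matrix_mult_def cadj_def)
qed

lemma kernel_map_leg3: "kernel_map (leg3 v K) x = kernel_map K (transpose v ** x)"
proof -
  have "(\<Sum>p\<in>UNIV. \<Sum>q\<in>UNIV. (\<Sum>c\<in>UNIV. v$p$c * K i j c q) * x$p$q)
      = (\<Sum>c\<in>UNIV. \<Sum>q\<in>UNIV. K i j c q * (\<Sum>p\<in>UNIV. v$p$c * x$p$q))" for i j
    by (simp add: sum_distrib_left sum_distrib_right mult_ac)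
       (subst sum_rotate3, rule sum.cong[OF refl], rule sum.swap)
  then show ?thesis
    by (simp add: vec_eq_iff kernel_map_def leg3_def matrix_matrix_mult_def transpose_def)
qed

lemma kernel_map_leg4: "kernel_map (leg4 v K) x = kernel_map K (x ** cadj (transpose v))"
proof -
  have "(\<Sum>p\<in>UNIV. \<Sum>q\<in>UNIV. (\<Sum>d\<in>UNIV. cnj (v$q$d) * K i j p d) * x$p$q)
      = (\<Sum>p\<in>UNIV. \<Sum>d\<in>UNIV. K i j p d * (\<Sum>q\<in>UNIV. x$p$q * cnj (v$q$d)))" for i j
    by (simp add: sum_distrib_left sum_distrib_right mult_ac)
       (rule sum.cong[OF refl], rule sum.swap)
  then show ?thesis
    by (simp add: vec_eq_iff kernel_map_def leg4_def matrix_matrix_mult_def transpose_def cadj_def)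
qed

lemma rho_kernel_map: "rho u (kernel_map G) = kernel_map (tensor_act u G)"
  by (simp add: fun_eq_iff rho_def ad_def tensor_act_def kernel_map_leg1 kernel_map_leg2
                kernel_map_leg3 kernel_map_leg4 matrix_mul_assoc)

lemma twirl_kernel_map:
  fixes \<mu> :: "(complex^'n::finite^'n) measure"
  assumes haar: "haar_unitary \<mu>"
  shows "twirl \<mu> (kernel_map G) x = kernel_map (twirl_kernel \<mu> G) x"
proof -
  have cont: "continuous_on unitaries (\<lambda>u. tensor_act u G i j p q)" for i j p q
    by (rule continuous_tensor_act)
  have "integrable \<mu> (\<lambda>u. kernel_map (tensor_act u G) x)"
    by (rule haar_integrable[OF haar])
       (simp add: kernel_map_def tensor_act_apply, intro continuous_intros)
  then have "twirl \<mu> (kernel_map G) x $ i $ j = integral\<^sup>L \<mu> (\<lambda>u. kernel_map (tensor_act u G) x $ i $ j)"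
    for i j
    unfolding twirl_def rho_kernel_map
    by (intro integral_bounded_linear[symmetric] bounded_linear_compose[OF bounded_linear_vec_nth]
              bounded_linear_vec_nth)
  then show ?thesis
    by (simp add: vec_eq_iff kernel_map_def twirl_kernel_def integral_sum integrable_sum
                  haar_integrable[OF haar cont])
qed

lemma kernel_map_werner_form:
  "kernel_map (\<lambda>i j p q. A * (kron i j * kron p q) + B * (kron i q * kron p j)) x $ i $ j
     = A * kron i j * trace x + B * x$j$i"
proof -
  have "kernel_map (\<lambda>i j p q. A * (kron i j * kron p q) + B * (kron i q * kron p j)) x $ i $ j
      = (\<Sum>p\<in>UNIV. \<Sum>q\<in>UNIV. A * kron i j * (kron p q * x$p$q))
        + (\<Sum>p\<in>UNIV. \<Sum>q\<in>UNIV. B * (kron i q * (kron p j * x$p$q)))"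
    by (simp add: kernel_map_def sum.distrib algebra_simps)
  also have "\<dots> = A * kron i j * trace x + B * x$j$i"
    by (simp add: trace_def kron_commute[of _ j] flip: sum_distrib_left)
  finally show ?thesis .
qed

lemma werner_coefficients:
  fixes A B n y z :: "'a::field_char_0"
  assumes "n \<noteq> 0" "n + 1 \<noteq> 0" "n - 1 \<noteq> 0"
  defines "P \<equiv> A * n\<^sup>2 + B * n" and "Q \<equiv> A * n + B * n\<^sup>2"
  shows "A * y + B * z = (P + Q) / (2 * n * (n + 1)) * (y + z) + (P - Q) / (2 * n * (n - 1)) * (y - z)"
proof -
  have "P + Q = (A + B) * (n * (n + 1))" and "P - Q = (A - B) * (n * (n - 1))"
    unfolding P_def Q_def by (simp_all add: algebra_simps power2_eq_square)
  then have "(P + Q) / (2 * n * (n + 1)) = (A + B) / 2" and "(P - Q) / (2 * n * (n - 1)) = (A - B) / 2"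
    using assms(1-3) by (simp_all add: mult.assoc)
  then show ?thesis by (simp only:) (simp add: field_simps)
qed

lemma contract_iipp_werner_form:
  "contract_iipp (\<lambda>(i::'n::finite) j p q. A * (kron i j * kron p q) + B * (kron i q * kron p j))
     = A * (of_nat CARD('n))\<^sup>2 + B * of_nat CARD('n)"
  by (simp add: contract_iipp_def sum.distrib power2_eq_square algebra_simps)

lemma contract_ippi_werner_form:
  "contract_ippi (\<lambda>(i::'n::finite) j p q. A * (kron i j * kron p q) + B * (kron i q * kron p j))
     = A * of_nat CARD('n) + B * (of_nat CARD('n))\<^sup>2"
  by (simp add: contract_ippi_def sum.distrib power2_eq_square algebra_simps)

lemma of_nat_card_ge_2_nonzero:
  assumes "CARD('n::finite) \<ge> 2"
  shows "(of_nat CARD('n) :: 'a::field_char_0) \<noteq> 0" and "of_nat CARD('n) + 1 \<noteq> (0::'a)"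
    and "of_nat CARD('n) - 1 \<noteq> (0::'a)"
proof -
  have "(of_nat CARD('n) :: 'a) + 1 = of_nat (Suc CARD('n))" and "(of_nat CARD('n) :: 'a) - 1 = of_nat (CARD('n) - 1)"
    using assms by (simp_all add: of_nat_diff)
  then show "(of_nat CARD('n) :: 'a) \<noteq> 0" "of_nat CARD('n) + 1 \<noteq> (0::'a)" "of_nat CARD('n) - 1 \<noteq> (0::'a)"
    using assms by (simp_all only: of_nat_eq_0_iff)
qed

lemma twirl_kernel_map_formula:
  fixes \<mu> :: "(complex^'n::finite^'n) measure" and G :: "'n tensor4"
  assumes card: "CARD('n) \<ge> 2" and haar: "haar_unitary \<mu>"
  defines "n \<equiv> of_nat CARD('n) :: complex" and "P \<equiv> contract_iipp G" and "Q \<equiv> contract_ippi G"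
  shows "twirl \<mu> (kernel_map G) x $ i $ j
           = (P + Q) / (2 * n * (n + 1)) * (kron i j * trace x + x$j$i)
           + (P - Q) / (2 * n * (n - 1)) * (kron i j * trace x - x$j$i)"
proof -
  obtain A B where form: "twirl_kernel \<mu> G = (\<lambda>i j p q. A * (kron i j * kron p q) + B * (kron i q * kron p j))"
    using unitarily_invariant_form[OF card twirl_kernel_unitarily_invariant[OF haar]] .
  have "P = contract_iipp (twirl_kernel \<mu> G)"
    by (simp add: P_def contract_iipp_twirl_kernel[OF haar])
  then have P: "P = A * n\<^sup>2 + B * n"
    by (simp add: n_def form contract_iipp_werner_form)
  have "Q = contract_ippi (twirl_kernel \<mu> G)"
    by (simp add: Q_def contract_ippi_twirl_kernel[OF haar])
  then have Q: "Q = A * n + B * n\<^sup>2"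
    by (simp add: n_def form contract_ippi_werner_form)
  have "n \<noteq> 0" "n + 1 \<noteq> 0" "n - 1 \<noteq> 0"
    unfolding n_def by (fact of_nat_card_ge_2_nonzero[OF card])+
  then have "A * (kron i j * trace x) + B * x$j$i
      = (P + Q) / (2 * n * (n + 1)) * (kron i j * trace x + x$j$i)
      + (P - Q) / (2 * n * (n - 1)) * (kron i j * trace x - x$j$i)"
    unfolding P Q by (rule werner_coefficients)
  then show ?thesis
    unfolding twirl_kernel_map[OF haar] form kernel_map_werner_form by (simp only: mult.assoc)
qed

section \<open>The completely positive map \<open>T\<^sub>a\<close>\<close>

locale tracial_star_algebra =
  fixes sc :: "complex \<Rightarrow> 'b::ring_1 \<Rightarrow> 'b" and st :: "'b \<Rightarrow> 'b" and tau :: "'b \<Rightarrow> complex"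
  assumes tracial: "tracial_star_alg sc st tau"
begin

lemma tau_add: "tau (x + y) = tau x + tau y"
  using tracial by (simp add: tracial_star_alg_def)

lemma tau_scale: "tau (sc c x) = c * tau x"
  using tracial by (simp add: tracial_star_alg_def)

lemma tau_commute: "tau (x * y) = tau (y * x)"
  using tracial by (simp add: tracial_star_alg_def)

lemma tau_adj_mult_real: "tau (st x * x) \<in> \<real>"
  using tracial unfolding tracial_star_alg_def by metis

lemma st_add: "st (x + y) = st x + st y"
  using tracial by (simp add: tracial_star_alg_def)

lemma sc_mult_left: "sc c (x * y) = sc c x * y"
  using tracial by (simp add: tracial_star_alg_def)

lemma sc_mult_right: "sc c (x * y) = x * sc c y"
  using tracial unfolding tracial_star_alg_def by metis

lemma tau_sum: "tau (\<Sum>i\<in>S. f i) = (\<Sum>i\<in>S. tau (f i))"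
proof -
  have "tau 0 = 0" using tau_add[of 0 0] by simp
  then show ?thesis by (induction S rule: infinite_finite_induct) (simp_all add: tau_add)
qed

lemma tau_diff: "tau (x - y) = tau x - tau y"
  using tau_add[of "x - y" y] by simp

lemma st_diff: "st (x - y) = st x - st y"
  using st_add[of "x - y" y] by simp

definition Tmap_kernel :: "'b^'n^'n \<Rightarrow> 'n::finite tensor4" where
  "Tmap_kernel a = (\<lambda>i j p q. tau (a$i$p * st (a$j$q)))"

lemma Tmap_eq_kernel_map: "Tmap sc st tau a = kernel_map (Tmap_kernel a)"
  for a :: "'b^'n::finite^'n"
proof (intro ext)
  fix y :: "complex^'n^'n"
  have "Tmap sc st tau a y $ i $ j = (\<Sum>p\<in>UNIV. \<Sum>q\<in>UNIV. tau (a$i$p * st (a$j$q)) * y$p$q)" for i j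
    unfolding Tmap_def matrix_matrix_mult_def tens1_def madj_def
    by (simp add: sum_distrib_right tau_sum tau_scale mult.assoc mult.commute flip: sc_mult_left sc_mult_right)
       (rule sum.swap)
  then show "Tmap sc st tau a y = kernel_map (Tmap_kernel a) y"
    by (simp add: vec_eq_iff kernel_map_def Tmap_kernel_def)
qed

lemma norm2_sq_eq:
  "complex_of_real (norm2_sq st tau b)
     = (\<Sum>i\<in>UNIV. \<Sum>k\<in>UNIV. tau (st (b$k$i) * b$k$i)) / of_nat CARD('n::finite)"
  for b :: "'b^'n^'n"
proof -
  have trace_eq: "(\<Sum>i\<in>UNIV. tau ((madj st b ** b) $ i $ i)) = (\<Sum>i\<in>UNIV. \<Sum>k\<in>UNIV. tau (st (b$k$i) * b$k$i))"
    by (simp add: madj_def matrix_matrix_mult_def tau_sum)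
  have "(\<Sum>i\<in>UNIV. \<Sum>k\<in>UNIV. tau (st (b$k$i) * b$k$i)) / of_nat CARD('n) \<in> \<real>"
    by (intro Reals_divide sum_in_Reals tau_adj_mult_real) simp
  then show ?thesis
    unfolding norm2_sq_def trace_eq by (rule of_real_Re)
qed

lemma norm2_sq_add_transpose:
  "complex_of_real (norm2_sq st tau (a + transpose a))
     = 2 * (contract_iipp (Tmap_kernel a) + contract_ippi (Tmap_kernel a)) / of_nat CARD('n::finite)"
  for a :: "'b^'n^'n"
proof -
  have "tau (st ((a + transpose a)$k$i) * (a + transpose a)$k$i)
      = tau (a$k$i * st (a$k$i)) + tau (a$i$k * st (a$i$k)) + tau (a$i$k * st (a$k$i)) + tau (a$k$i * st (a$i$k))"
    for i k
    by (simp add: transpose_def st_add algebra_simps tau_add tau_commute[of "st _"])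
  then show ?thesis
    by (simp add: norm2_sq_eq contract_iipp_def contract_ippi_def Tmap_kernel_def sum.distrib
                  sum.swap[of "\<lambda>k i. tau (a$k$i * st (a$k$i))"] sum.swap[of "\<lambda>k i. tau (a$k$i * st (a$i$k))"])
qed

lemma norm2_sq_diff_transpose:
  "complex_of_real (norm2_sq st tau (a - transpose a))
     = 2 * (contract_iipp (Tmap_kernel a) - contract_ippi (Tmap_kernel a)) / of_nat CARD('n::finite)"
  for a :: "'b^'n^'n"
proof -
  have "tau (st ((a - transpose a)$k$i) * (a - transpose a)$k$i)
      = tau (a$k$i * st (a$k$i)) + tau (a$i$k * st (a$i$k)) - tau (a$i$k * st (a$k$i)) - tau (a$k$i * st (a$i$k))"
    for i k
    by (simp add: transpose_def st_diff algebra_simps tau_add tau_diff tau_commute[of "st _"])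
  then show ?thesis
    by (simp add: norm2_sq_eq contract_iipp_def contract_ippi_def Tmap_kernel_def sum.distrib sum_subtractf
                  sum.swap[of "\<lambda>k i. tau (a$k$i * st (a$k$i))"] sum.swap[of "\<lambda>k i. tau (a$k$i * st (a$i$k))"])
qed

end

lemma W_plus_entry: "W_plus x $ i $ j = (kron i j * trace x + x$j$i) / (of_nat CARD('n) + 1)"
  for x :: "complex^'n::finite^'n"
  by (simp add: W_plus_def mat_def kron_def transpose_def) (simp add: scaleR_conv_of_real)

lemma W_minus_entry: "W_minus x $ i $ j = (kron i j * trace x - x$j$i) / (of_nat CARD('n) - 1)"
  for x :: "complex^'n::finite^'n"
  by (simp add: W_minus_def mat_def kron_def transpose_def) (simp add: scaleR_conv_of_real)

lemma of_real_quarter_divide: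
  "complex_of_real r = 2 * X / n \<Longrightarrow> complex_of_real (r / 4) / d = X / (2 * n * d)"
  by simp

theorem lemma5p5:
  fixes sc :: "complex \<Rightarrow> 'b::ring_1 \<Rightarrow> 'b" and st :: "'b \<Rightarrow> 'b" and tau :: "'b \<Rightarrow> complex"
    and a :: "'b^'n^'n" and \<mu> :: "(complex^'n^'n) measure"
  assumes "CARD('n) \<ge> 2"
    and "tracial_star_alg sc st tau"
    and "haar_unitary \<mu>"
  shows "twirl \<mu> (Tmap sc st tau a) =
    (\<lambda>x. (norm2_sq st tau (a + transpose a) / 4) *\<^sub>R W_plus x
        + (norm2_sq st tau (a - transpose a) / 4) *\<^sub>R W_minus x)"
proof (intro ext iffD2[OF vec_eq_iff] allI)
  fix x :: "complex^'n^'n" and i j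
  interpret tracial_star_algebra sc st tau
    by unfold_locales (rule assms(2))
  let ?n = "of_nat CARD('n) :: complex"
  define P Q where "P = contract_iipp (Tmap_kernel a)" and "Q = contract_ippi (Tmap_kernel a)"
  define Y Z where "Y = kron i j * trace x + x$j$i" and "Z = kron i j * trace x - x$j$i"
  have "of_real (norm2_sq st tau (a + transpose a) / 4) / (?n + 1) = (P + Q) / (2 * ?n * (?n + 1))"
    using norm2_sq_add_transpose unfolding P_def Q_def by (rule of_real_quarter_divide)
  moreover have "of_real (norm2_sq st tau (a - transpose a) / 4) / (?n - 1) = (P - Q) / (2 * ?n * (?n - 1))"
    using norm2_sq_diff_transpose unfolding P_def Q_def by (rule of_real_quarter_divide)
  moreover have "((norm2_sq st tau (a + transpose a) / 4) *\<^sub>R W_plus x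
        + (norm2_sq st tau (a - transpose a) / 4) *\<^sub>R W_minus x) $ i $ j
      = of_real (norm2_sq st tau (a + transpose a) / 4) / (?n + 1) * Y
        + of_real (norm2_sq st tau (a - transpose a) / 4) / (?n - 1) * Z"
    unfolding vector_add_component vector_scaleR_component W_plus_entry W_minus_entry Y_def Z_def
    by (simp add: scaleR_conv_of_real)
  ultimately show "twirl \<mu> (Tmap sc st tau a) x $ i $ j = ((norm2_sq st tau (a + transpose a) / 4) *\<^sub>R W_plus x
        + (norm2_sq st tau (a - transpose a) / 4) *\<^sub>R W_minus x) $ i $ j"
    by (simp add: Tmap_eq_kernel_map twirl_kernel_map_formula[OF assms(1,3)] P_def Q_def Y_def Z_def)
qed

end
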